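(* Let $Q\in\mathbb{R}^{n\times n}$ be symmetric nonsingular with eigenvalues $\lambda_1\ge\dots\ge\lambda_{n-1}>0>\lambda_n$ and orthonormal eigenvectors $u_1,\dots,u_n$ ($Qu_i=\lambda_iu_i$), let $\mathcal{C_L}=\{x: x^TQx\le0,\ x^TQu_n\le0\}$, and let $A\in\mathbb{R}^{n\times n}$. Then $\mathcal{C_L}$ is an invariant set for the discrete system $x_{k+1}=Ax_k$ (i.e., $A\mathcal{C_L}\subseteq\mathcal{C_L}$) if and only if there exists $\mu\ge0$ such that $$A^TQA-\mu Q\preceq0,\qquad u_n^TAu_n\ge0,\qquad u_n^TAQ^{-1}A^Tu_n\le0.$$ The same conditions characterize invariance of $-\mathcal{C_L}$.
   Context: $\preceq0$ denotes negative semidefiniteness. *)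

theory Defs
  imports "HOL-Analysis.Analysis"
begin

definition neg_semidef :: "real^'n^'n \<Rightarrow> bool" where
  "neg_semidef M \<longleftrightarrow> (\<forall>x::real^'n. x \<bullet> (M *v x) \<le> 0)"

definition CL :: "real^'n^'n \<Rightarrow> real^'n \<Rightarrow> (real^'n) set" where
  "CL Q un = {x. x \<bullet> (Q *v x) \<le> 0 \<and> x \<bullet> (Q *v un) \<le> 0}"

definition dinvariant :: "real^'n^'n \<Rightarrow> (real^'n) set \<Rightarrow> bool" where
  "dinvariant A S \<longleftrightarrow> (\<forall>x\<in>S. A *v x \<in> S)"

end

theory Submission
  imports Defs
begin

(* Invariance means two things for x in CL: (i) <Q A x, A x> <= 0 and (ii) A x . u_k >= 0.
   Condition (i) only involves the even function x -> <A^T Q A x, x>, so it is the same as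
   "<Qx,x> <= 0 implies <A^T Q A x,x> <= 0", which the S-lemma (one constraint, proved here
   by restricting both forms to a line through points with <Qx,x> < 0 < <Qy,y>) turns into
   A^T Q A - mu Q <= 0 for some mu >= 0.  Condition (ii) says that v = A^T u_k lies in the
   dual cone of CL; working in the eigenbasis of Q we show this dual cone is
   {v. v . u_k >= 0, <Q^-1 v, v> <= 0}, using a weighted Cauchy-Schwarz inequality in one
   direction and an explicit boundary point of CL in the other.
   The statement for -CL follows since A commutes with negation. *)

lemma inner_matrix_transpose:
  fixes A :: "real^'n^'m"
  shows "(A *v x) \<bullet> y = x \<bullet> (transpose A *v y)"
  by (metis dot_lmul_matrix inner_commute transpose_matrix_vector)

lemma symmetric_quadratic_form_on_line:
  fixes M :: "real^'n^'n"
  assumes "transpose M = M"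
  shows "(x + t *\<^sub>R y) \<bullet> (M *v (x + t *\<^sub>R y))
           = x \<bullet> (M *v x) + 2 * t * (x \<bullet> (M *v y)) + t\<^sup>2 * (y \<bullet> (M *v y))"
proof -
  have "y \<bullet> (M *v x) = x \<bullet> (M *v y)"
    by (metis assms inner_commute inner_matrix_transpose)
  then show ?thesis
    by (simp add: power2_eq_square algebra_simps)
qed

lemma quadratic_roots_of_opposite_sign:
  fixes a b c :: real
  assumes "a > 0" and "c < 0"
  obtains t1 t2 where "t1 < 0" "t2 > 0" "t1 * t2 = c / a"
    "c + 2 * t1 * b + t1\<^sup>2 * a = 0" "c + 2 * t2 * b + t2\<^sup>2 * a = 0"
proof -
  define s where "s = sqrt (b\<^sup>2 - a * c)"
  have "a * c < 0" using assms by (simp add: mult_pos_neg)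
  then have "0 \<le> b\<^sup>2 - a * c" using zero_le_power2[of b] by linarith
  then have s2: "s\<^sup>2 = b\<^sup>2 - a * c" unfolding s_def by simp
  have "\<bar>b\<bar> < s"
    using \<open>a * c < 0\<close> unfolding s_def by (simp add: real_less_rsqrt)
  have root: "c + 2 * t * b + t\<^sup>2 * a = 0" if "a * t + b = e * s" "e\<^sup>2 = 1" for t e
  proof -
    have "a * (c + 2 * t * b + t\<^sup>2 * a) = a * c + (a * t + b)\<^sup>2 - b\<^sup>2"
      by (simp add: power2_eq_square algebra_simps)
    also have "\<dots> = 0" using that s2 by (simp add: power_mult_distrib)
    finally show ?thesis using assms by simp
  qed
  define t1 where "t1 = (- b - s) / a"
  define t2 where "t2 = (- b + s) / a"
  have "t1 < 0" "t2 > 0"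
    unfolding t1_def t2_def using assms \<open>\<bar>b\<bar> < s\<close> by (simp_all add: divide_neg_pos)
  moreover have "t1 * t2 = c / a"
  proof -
    have "t1 * t2 = (b\<^sup>2 - s\<^sup>2) / a\<^sup>2"
      unfolding t1_def t2_def by (simp add: power2_eq_square algebra_simps)
    then show ?thesis using assms s2 by (simp add: power2_eq_square)
  qed
  moreover have "c + 2 * t1 * b + t1\<^sup>2 * a = 0" "c + 2 * t2 * b + t2\<^sup>2 * a = 0"
    using assms root[of t1 "-1"] root[of t2 1] unfolding t1_def t2_def by simp_all
  ultimately show ?thesis using that by blast
qed

(* If a quadratic is nonpositive at some t1 < 0 and some t2 > 0, its constant
   coefficient is bounded by a t1 t2 (combine the two values with weights t2 and -t1). *)
lemma quadratic_nonpos_at_opposite_signs: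
  fixes a b c t1 t2 :: real
  assumes "t1 < 0" "t2 > 0"
    and "c + 2 * t1 * b + t1\<^sup>2 * a \<le> 0" "c + 2 * t2 * b + t2\<^sup>2 * a \<le> 0"
  shows "c \<le> a * (t1 * t2)"
proof -
  have "t2 * (c + 2 * t1 * b + t1\<^sup>2 * a) \<le> 0" "(- t1) * (c + 2 * t2 * b + t2\<^sup>2 * a) \<le> 0"
    using assms by (simp_all only: mult_nonneg_nonpos less_imp_le neg_0_le_iff_le)
  moreover have "t2 * (c + 2 * t1 * b + t1\<^sup>2 * a) + (- t1) * (c + 2 * t2 * b + t2\<^sup>2 * a)
                   = (t2 - t1) * (c - a * (t1 * t2))"
    by (simp add: power2_eq_square algebra_simps)
  ultimately have "(t2 - t1) * (c - a * (t1 * t2)) \<le> 0" by linarith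
  then show ?thesis
    using assms by (simp add: mult_le_0_iff)
qed

(* Restrict both forms to the line
   through x and y: g vanishes at t1 < 0 < t2, so F is nonpositive there. *)
lemma S_lemma_ratio_bound:
  fixes M Q :: "real^'n^'n"
  assumes symM: "transpose M = M" and symQ: "transpose Q = Q"
    and nonpos: "\<And>z. z \<bullet> (Q *v z) \<le> 0 \<Longrightarrow> z \<bullet> (M *v z) \<le> 0"
    and x: "x \<bullet> (Q *v x) < 0" and y: "y \<bullet> (Q *v y) > 0"
  shows "(y \<bullet> (M *v y)) / (y \<bullet> (Q *v y)) \<le> (x \<bullet> (M *v x)) / (x \<bullet> (Q *v x))"
proof -
  obtain t1 t2 where t: "t1 < 0" "t2 > 0" "t1 * t2 = (x \<bullet> (Q *v x)) / (y \<bullet> (Q *v y))"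
    and roots: "x \<bullet> (Q *v x) + 2 * t1 * (x \<bullet> (Q *v y)) + t1\<^sup>2 * (y \<bullet> (Q *v y)) = 0"
               "x \<bullet> (Q *v x) + 2 * t2 * (x \<bullet> (Q *v y)) + t2\<^sup>2 * (y \<bullet> (Q *v y)) = 0"
    using quadratic_roots_of_opposite_sign[OF y x] by metis
  have "x \<bullet> (M *v x) + 2 * t * (x \<bullet> (M *v y)) + t\<^sup>2 * (y \<bullet> (M *v y)) \<le> 0"
    if "t \<in> {t1, t2}" for t
    using that roots nonpos[of "x + t *\<^sub>R y"]
    by (auto simp: symmetric_quadratic_form_on_line[OF symQ] symmetric_quadratic_form_on_line[OF symM])
  then have "x \<bullet> (M *v x) \<le> (y \<bullet> (M *v y)) * (t1 * t2)"
    by (intro quadratic_nonpos_at_opposite_signs[OF t(1,2)]) auto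
  then show ?thesis
    using x y t(3) by (simp add: field_simps)
qed

(* The S-lemma with one constraint: if g takes a negative value and g <= 0 implies
   F <= 0, then F <= mu g for some mu >= 0 (take mu = inf of F/g over {g < 0}). *)
lemma S_lemma:
  fixes M Q :: "real^'n^'n"
  assumes symM: "transpose M = M" and symQ: "transpose Q = Q"
    and strict: "x0 \<bullet> (Q *v x0) < 0"
    and nonpos: "\<And>z. z \<bullet> (Q *v z) \<le> 0 \<Longrightarrow> z \<bullet> (M *v z) \<le> 0"
  shows "\<exists>\<mu>\<ge>0. \<forall>x. x \<bullet> (M *v x) \<le> \<mu> * (x \<bullet> (Q *v x))"
proof -
  define S where "S = {(x \<bullet> (M *v x)) / (x \<bullet> (Q *v x)) | x. x \<bullet> (Q *v x) < 0}"
  have S_nonempty: "S \<noteq> {}" unfolding S_def using strict by auto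
  have S_nonneg: "0 \<le> r" if "r \<in> S" for r
    using that nonpos unfolding S_def by (auto intro: divide_nonpos_neg)
  define \<mu> where "\<mu> = Inf S"
  have "\<mu> \<ge> 0" unfolding \<mu>_def using S_nonempty S_nonneg by (simp add: cInf_greatest)
  moreover have "x \<bullet> (M *v x) \<le> \<mu> * (x \<bullet> (Q *v x))" for x
  proof (cases "x \<bullet> (Q *v x)" "0 :: real" rule: linorder_cases)
    case less
    then have "\<mu> \<le> (x \<bullet> (M *v x)) / (x \<bullet> (Q *v x))"
      unfolding \<mu>_def using S_nonneg by (intro cInf_lower) (auto simp: S_def bdd_below_def)
    then show ?thesis using less by (simp add: le_divide_eq)
  next
    case equal
    then show ?thesis using nonpos[of x] by simp
  next
    case greater
    have "(x \<bullet> (M *v x)) / (x \<bullet> (Q *v x)) \<le> \<mu>"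
      unfolding \<mu>_def using S_lemma_ratio_bound[OF symM symQ nonpos _ greater]
      by (intro cInf_greatest[OF S_nonempty]) (auto simp: S_def)
    then show ?thesis using greater by (simp add: divide_le_eq)
  qed
  ultimately show ?thesis by blast
qed

lemma neg_semidef_diff_iff:
  fixes M Q :: "real^'n^'n"
  shows "neg_semidef (M - \<mu> *\<^sub>R Q) \<longleftrightarrow> (\<forall>x. x \<bullet> (M *v x) \<le> \<mu> * (x \<bullet> (Q *v x)))"
  unfolding neg_semidef_def
  by (simp add: matrix_vector_mult_diff_rdistrib scaleR_matrix_vector_assoc[symmetric] inner_diff_right)

lemma S_lemma_converse:
  fixes M Q :: "real^'n^'n"
  assumes "\<mu> \<ge> 0" and "\<forall>x. x \<bullet> (M *v x) \<le> \<mu> * (x \<bullet> (Q *v x))" and "z \<bullet> (Q *v z) \<le> 0"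
  shows "z \<bullet> (M *v z) \<le> 0"
  using assms mult_nonneg_nonpos[of \<mu> "z \<bullet> (Q *v z)"] by (meson order_trans)

lemma orthonormal_expansion:
  fixes u :: "'n::finite \<Rightarrow> real^'n"
  assumes orth: "\<And>i j. u i \<bullet> u j = (if i = j then 1 else 0)"
  shows "y = (\<Sum>i\<in>UNIV. (y \<bullet> u i) *\<^sub>R u i)"
proof -
  have "inj u"
    by (rule injI) (metis orth zero_neq_one)
  have "pairwise orthogonal (range u)" "0 \<notin> range u"
    using orth by (auto simp: pairwise_def orthogonal_def) (metis inner_zero_left zero_neq_one)
  then have "independent (range u)" by (rule pairwise_orthogonal_independent)
  moreover have "card (range u) = CARD('n)" using \<open>inj u\<close> by (simp add: card_image)
  ultimately have spanning: "UNIV \<subseteq> span (range u)"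
    using card_ge_dim_independent[of "range u" UNIV] by simp
  define z where "z = y - (\<Sum>i\<in>UNIV. (y \<bullet> u i) *\<^sub>R u i)"
  have z_orth: "z \<bullet> u j = 0" for j
  proof -
    have "(\<Sum>i\<in>UNIV. (y \<bullet> u i) *\<^sub>R u i) \<bullet> u j = (\<Sum>i\<in>UNIV. (y \<bullet> u i) * (u i \<bullet> u j))"
      by (simp add: inner_sum_left)
    also have "\<dots> = y \<bullet> u j" by (simp add: orth if_distrib[of "(*) _"] cong: if_cong)
    finally show ?thesis unfolding z_def by (simp add: inner_diff_left)
  qed
  have "orthogonal z z"
    by (rule orthogonal_to_span[of z "range u"])
       (use spanning z_orth in \<open>auto simp: orthogonal_def inner_commute\<close>)
  then show ?thesis unfolding z_def by (simp add: orthogonal_def)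
qed

lemma weighted_Cauchy_Schwarz:
  fixes c d w :: "'a \<Rightarrow> real"
  assumes "\<And>i. i \<in> I \<Longrightarrow> w i > 0"
  shows "(\<Sum>i\<in>I. c i * d i)\<^sup>2 \<le> (\<Sum>i\<in>I. w i * (c i)\<^sup>2) * (\<Sum>i\<in>I. (d i)\<^sup>2 / w i)"
proof -
  have "c i * d i = (sqrt (w i) * c i) * (d i / sqrt (w i))"
    "w i * (c i)\<^sup>2 = (sqrt (w i) * c i)\<^sup>2"
    "(d i)\<^sup>2 / w i = (d i / sqrt (w i))\<^sup>2" if "i \<in> I" for i
    using assms[OF that] by (simp_all add: power_mult_distrib power_divide)
  then show ?thesis
    using Cauchy_Schwarz_ineq_sum[of "\<lambda>i. sqrt (w i) * c i" "\<lambda>i. d i / sqrt (w i)" I]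
    by (simp cong: sum.cong)
qed

lemma matrix_inv_right:
  fixes Q :: "real^'n^'n"
  assumes "invertible Q"
  shows "Q ** matrix_inv Q = mat 1"
  using assms unfolding invertible_def matrix_inv_def by (metis (mono_tags, lifting) someI_ex)

locale lorentz_eigenbasis =
  fixes Q :: "real^'n::finite^'n" and u :: "'n \<Rightarrow> real^'n" and lam :: "'n \<Rightarrow> real" and k :: 'n
  assumes symQ: "transpose Q = Q"
    and invQ: "invertible Q"
    and orth: "\<And>i j. u i \<bullet> u j = (if i = j then 1 else 0)"
    and eig: "\<And>i. Q *v u i = lam i *s u i"
    and neg: "lam k < 0"
    and pos: "\<And>i. i \<noteq> k \<Longrightarrow> lam i > 0"
begin

lemma lam_nonzero: "lam i \<noteq> 0"
  using neg pos[of i] by (cases "i = k") auto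

lemma Q_coord: "(Q *v y) \<bullet> u j = lam j * (y \<bullet> u j)"
proof -
  have "(Q *v y) \<bullet> u j = y \<bullet> (Q *v u j)"
    by (metis inner_matrix_transpose symQ)
  then show ?thesis using eig[of j] by (simp add: scalar_mult_eq_scaleR)
qed

lemma Q_inv_coord: "(matrix_inv Q *v y) \<bullet> u j = (y \<bullet> u j) / lam j"
proof -
  have "y = Q *v (matrix_inv Q *v y)"
    by (simp add: matrix_vector_mul_assoc matrix_inv_right[OF invQ])
  then have "y \<bullet> u j = lam j * ((matrix_inv Q *v y) \<bullet> u j)" by (metis Q_coord)
  then show ?thesis using lam_nonzero[of j] by simp
qed

lemma inner_eigencoords: "x \<bullet> y = (\<Sum>i\<in>UNIV. (x \<bullet> u i) * (y \<bullet> u i))"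
proof -
  have "x \<bullet> y = (\<Sum>i\<in>UNIV. (x \<bullet> u i) *\<^sub>R u i) \<bullet> y"
    using orthonormal_expansion[OF orth, of x] by simp
  also have "\<dots> = (\<Sum>i\<in>UNIV. (x \<bullet> u i) * (u i \<bullet> y))"
    by (simp add: inner_sum_left)
  finally show ?thesis by (simp add: inner_commute)
qed

lemma quad_eigencoords: "x \<bullet> (Q *v x) = (\<Sum>i\<in>UNIV. lam i * (x \<bullet> u i)\<^sup>2)"
  by (subst inner_eigencoords) (simp add: Q_coord power2_eq_square mult.left_commute)

lemma inv_quad_eigencoords: "y \<bullet> (matrix_inv Q *v y) = (\<Sum>i\<in>UNIV. (y \<bullet> u i)\<^sup>2 / lam i)"
  by (subst inner_eigencoords) (simp add: Q_inv_coord power2_eq_square)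

lemma eigencoords_of_combination: "(\<Sum>i\<in>UNIV. e i *\<^sub>R u i) \<bullet> u j = e j"
  by (simp add: inner_sum_left orth if_distrib[of "(*) _"] cong: if_cong)

(* Since Q u_k = lam_k u_k with lam_k < 0, the cone is {x. <Qx,x> <= 0, x . u_k >= 0}. *)
lemma CL_eq: "CL Q (u k) = {x. x \<bullet> (Q *v x) \<le> 0 \<and> x \<bullet> u k \<ge> 0}"
proof -
  have "x \<bullet> (Q *v u k) = lam k * (x \<bullet> u k)" for x
    using eig[of k] by (simp add: scalar_mult_eq_scaleR)
  then show ?thesis
    using neg unfolding CL_def by (auto simp: mult_le_0_iff)
qed

(* If the positive part R = sum_{i ~= k} v_i^2 / lam_i of <Q^-1 v,v> is positive, the
   boundary point with x_k = 1 and x_i = -s v_i / lam_i (s^2 R = -lam_k) lies in the cone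
   and makes x . v as small as v_k - sqrt(-lam_k R). *)
lemma cone_witness:
  assumes R_pos: "(\<Sum>i\<in>UNIV - {k}. (v \<bullet> u i)\<^sup>2 / lam i) > 0"
  shows "\<exists>x\<in>CL Q (u k).
           x \<bullet> v = v \<bullet> u k - sqrt (- lam k * (\<Sum>i\<in>UNIV - {k}. (v \<bullet> u i)\<^sup>2 / lam i))"
proof -
  define R where "R = (\<Sum>i\<in>UNIV - {k}. (v \<bullet> u i)\<^sup>2 / lam i)"
  define s where "s = sqrt (- lam k / R)"
  define e where "e i = (if i = k then 1 else - s * (v \<bullet> u i) / lam i)" for i
  define x where "x = (\<Sum>i\<in>UNIV. e i *\<^sub>R u i)"
  have R0: "R > 0" using R_pos unfolding R_def .
  have "- lam k / R > 0" using R0 neg by (simp add: divide_neg_pos)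
  then have s2: "s\<^sup>2 * R = - lam k" unfolding s_def using R0 by simp
  have x_coord: "x \<bullet> u j = e j" for j unfolding x_def by (rule eigencoords_of_combination)
  have "lam i * (e i)\<^sup>2 = s\<^sup>2 * ((v \<bullet> u i)\<^sup>2 / lam i)"
       "e i * (v \<bullet> u i) = - s * ((v \<bullet> u i)\<^sup>2 / lam i)" if "i \<noteq> k" for i
    using that lam_nonzero[of i] unfolding e_def by (simp_all add: power2_eq_square field_simps)
  then have off_k: "(\<Sum>i\<in>UNIV - {k}. lam i * (e i)\<^sup>2) = s\<^sup>2 * R"
                   "(\<Sum>i\<in>UNIV - {k}. e i * (v \<bullet> u i)) = - s * R"
    unfolding R_def by (simp_all add: sum_distrib_left)
  have "x \<bullet> (Q *v x) = lam k + s\<^sup>2 * R"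
    unfolding quad_eigencoords x_coord sum.remove[OF finite UNIV_I, of _ k] off_k
    by (simp add: e_def)
  then have "x \<in> CL Q (u k)" using s2 x_coord[of k] unfolding CL_eq e_def by simp
  moreover have "x \<bullet> v = v \<bullet> u k - s * R"
    unfolding inner_eigencoords[of x v] x_coord sum.remove[OF finite UNIV_I, of _ k] off_k
    by (simp add: e_def)
  moreover have "s * R = sqrt (- lam k * R)"
  proof -
    have "s * R = sqrt (- lam k / R) * sqrt (R\<^sup>2)" unfolding s_def using R0 by simp
    also have "\<dots> = sqrt (- lam k / R * R\<^sup>2)" by (rule real_sqrt_mult[symmetric])
    also have "- lam k / R * R\<^sup>2 = - lam k * R" using R0 by (simp add: power2_eq_square)
    finally show ?thesis .
  qed
  ultimately show ?thesis unfolding R_def by metis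
qed

(* The dual cone is contained in {v. v_k >= 0, <Q^-1 v,v> <= 0}: u_k is in the cone,
   and otherwise the witness above has negative inner product with v. *)
lemma dual_cone_necessary:
  assumes dual: "\<forall>x\<in>CL Q (u k). x \<bullet> v \<ge> 0"
  shows "v \<bullet> u k \<ge> 0 \<and> v \<bullet> (matrix_inv Q *v v) \<le> 0"
proof
  have "u k \<bullet> (Q *v u k) = lam k"
    using Q_coord[of "u k" k] orth[of k k] by (simp add: inner_commute)
  then have "u k \<in> CL Q (u k)" using neg orth[of k k] unfolding CL_eq by simp
  then show "v \<bullet> u k \<ge> 0" using dual by (metis inner_commute)
  show "v \<bullet> (matrix_inv Q *v v) \<le> 0"
  proof (rule ccontr)
    define R where "R = (\<Sum>i\<in>UNIV - {k}. (v \<bullet> u i)\<^sup>2 / lam i)"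
    assume "\<not> v \<bullet> (matrix_inv Q *v v) \<le> 0"
    then have "0 < (v \<bullet> u k)\<^sup>2 / lam k + R"
      unfolding inv_quad_eigencoords sum.remove[OF finite UNIV_I, of _ k] R_def by simp
    then have lt: "(v \<bullet> u k)\<^sup>2 < - lam k * R"
      using neg by (simp add: field_simps)
    then have "0 < - lam k * R" using zero_le_power2[of "v \<bullet> u k"] by linarith
    then have "R > 0" using neg by (simp add: mult_less_0_iff)
    then obtain x where "x \<in> CL Q (u k)" and xv: "x \<bullet> v = v \<bullet> u k - sqrt (- lam k * R)"
      using cone_witness unfolding R_def by blast
    moreover have "v \<bullet> u k < sqrt (- lam k * R)"
      using real_less_rsqrt[OF lt] .
    ultimately show False using dual xv by (metis diff_less_0_iff_less not_le)
  qed
qed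

(* Conversely, splitting off the k-th coordinate, weighted Cauchy-Schwarz bounds the
   remaining part of x . v by x_k v_k. *)
lemma dual_cone_sufficient:
  assumes "v \<bullet> u k \<ge> 0" and "v \<bullet> (matrix_inv Q *v v) \<le> 0" and "x \<in> CL Q (u k)"
  shows "x \<bullet> v \<ge> 0"
proof -
  define c where "c i = x \<bullet> u i" for i
  define d where "d i = v \<bullet> u i" for i
  define P where "P = (\<Sum>i\<in>UNIV - {k}. lam i * (c i)\<^sup>2)"
  define R where "R = (\<Sum>i\<in>UNIV - {k}. (d i)\<^sup>2 / lam i)"
  define T where "T = (\<Sum>i\<in>UNIV - {k}. c i * d i)"
  have ck: "c k \<ge> 0" and dk: "d k \<ge> 0"
    using assms unfolding CL_eq c_def d_def by simp_all
  have "lam k * (c k)\<^sup>2 + P \<le> 0" "(d k)\<^sup>2 / lam k + R \<le> 0"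
    using assms unfolding CL_eq quad_eigencoords inv_quad_eigencoords
      sum.remove[OF finite UNIV_I, of _ k] P_def R_def c_def d_def by simp_all
  then have P_le: "P \<le> - lam k * (c k)\<^sup>2" and R_le: "R \<le> (d k)\<^sup>2 / - lam k"
    using neg by (simp_all add: field_simps)
  have P0: "P \<ge> 0" and R0: "R \<ge> 0"
    unfolding P_def R_def
    by (auto intro!: sum_nonneg mult_nonneg_nonneg divide_nonneg_nonneg less_imp_le[OF pos])
  have "T\<^sup>2 \<le> P * R"
    unfolding T_def P_def R_def by (rule weighted_Cauchy_Schwarz) (simp add: pos)
  also have "\<dots> \<le> (- lam k * (c k)\<^sup>2) * ((d k)\<^sup>2 / - lam k)"
    using P_le R_le P0 R0 by (intro mult_mono) auto
  also have "\<dots> = (c k * d k)\<^sup>2"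
    using neg by (simp add: power_mult_distrib)
  finally have "\<bar>T\<bar> \<le> c k * d k"
    using ck dk by (simp add: power2_le_iff_abs_le)
  moreover have "x \<bullet> v = c k * d k + T"
    unfolding inner_eigencoords[of x v] sum.remove[OF finite UNIV_I, of _ k] T_def c_def d_def ..
  ultimately show ?thesis by linarith
qed

lemma dual_cone:
  "(\<forall>x\<in>CL Q (u k). x \<bullet> v \<ge> 0) \<longleftrightarrow> v \<bullet> u k \<ge> 0 \<and> v \<bullet> (matrix_inv Q *v v) \<le> 0"
  using dual_cone_necessary dual_cone_sufficient by blast

(* A quadratic form is nonpositive on the cone iff it is nonpositive on {<Qx,x> <= 0},
   since the latter set is the cone together with its negative. *)
lemma quad_nonpos_on_CL_iff:
  fixes M :: "real^'n^'n"
  shows "(\<forall>x\<in>CL Q (u k). x \<bullet> (M *v x) \<le> 0) \<longleftrightarrow> (\<forall>x. x \<bullet> (Q *v x) \<le> 0 \<longrightarrow> x \<bullet> (M *v x) \<le> 0)"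
proof (intro iffI allI impI)
  fix x assume on_CL: "\<forall>x\<in>CL Q (u k). x \<bullet> (M *v x) \<le> 0" and "x \<bullet> (Q *v x) \<le> 0"
  show "x \<bullet> (M *v x) \<le> 0"
  proof (cases "x \<bullet> u k \<ge> 0")
    case True
    then show ?thesis using on_CL \<open>x \<bullet> (Q *v x) \<le> 0\<close> unfolding CL_eq by simp
  next
    case False
    then have "- x \<in> CL Q (u k)" using \<open>x \<bullet> (Q *v x) \<le> 0\<close> unfolding CL_eq by (simp add: vec.neg)
    then show ?thesis using on_CL by (auto simp: vec.neg)
  qed
qed (simp add: CL_eq)


lemma dinvariant_CL_iff:
  fixes A :: "real^'n^'n"
  shows "dinvariant A (CL Q (u k)) \<longleftrightarrow>
           (\<exists>\<mu>::real. \<mu> \<ge> 0 \<and> neg_semidef (transpose A ** Q ** A - \<mu> *\<^sub>R Q)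
              \<and> u k \<bullet> (A *v u k) \<ge> 0
              \<and> u k \<bullet> ((A ** matrix_inv Q ** transpose A) *v u k) \<le> 0)"
proof -
  define M where "M = transpose A ** Q ** A"
  define v where "v = transpose A *v u k"
  have M_form: "(A *v x) \<bullet> (Q *v (A *v x)) = x \<bullet> (M *v x)" for x
    unfolding M_def by (simp add: inner_matrix_transpose matrix_vector_mul_assoc matrix_mul_assoc)
  have v_form: "(A *v x) \<bullet> u k = x \<bullet> v" for x
    unfolding v_def by (rule inner_matrix_transpose)
  have symM: "transpose M = M"
    unfolding M_def by (simp add: matrix_transpose_mul symQ matrix_mul_assoc)
  have "u k \<bullet> (Q *v u k) < 0"
    using Q_coord[of "u k" k] orth[of k k] neg by (simp add: inner_commute)
  then have S: "(\<forall>x. x \<bullet> (Q *v x) \<le> 0 \<longrightarrow> x \<bullet> (M *v x) \<le> 0) \<longleftrightarrow>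
                (\<exists>\<mu>\<ge>0. neg_semidef (M - \<mu> *\<^sub>R Q))"
    using S_lemma[OF symM symQ] S_lemma_converse unfolding neg_semidef_diff_iff by blast
  have "dinvariant A (CL Q (u k)) \<longleftrightarrow>
          (\<forall>x\<in>CL Q (u k). x \<bullet> (M *v x) \<le> 0) \<and> (\<forall>x\<in>CL Q (u k). x \<bullet> v \<ge> 0)"
    unfolding dinvariant_def by (auto simp: CL_eq M_form v_form)
  also have "\<dots> \<longleftrightarrow> (\<exists>\<mu>\<ge>0. neg_semidef (M - \<mu> *\<^sub>R Q))
                     \<and> v \<bullet> u k \<ge> 0 \<and> v \<bullet> (matrix_inv Q *v v) \<le> 0"
    unfolding quad_nonpos_on_CL_iff S dual_cone ..
  also have "v \<bullet> u k = u k \<bullet> (A *v u k)"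
    using v_form[of "u k"] by (simp add: inner_commute)
  also have "v \<bullet> (matrix_inv Q *v v) = u k \<bullet> ((A ** matrix_inv Q ** transpose A) *v u k)"
  proof -
    have "(A ** matrix_inv Q ** transpose A) *v u k = A *v (matrix_inv Q *v v)"
      unfolding v_def by (simp only: matrix_vector_mul_assoc matrix_mul_assoc)
    then show ?thesis using v_form[of "matrix_inv Q *v v"] by (simp add: inner_commute)
  qed
  finally show ?thesis unfolding M_def by blast
qed

end

lemma dinvariant_uminus:
  fixes A :: "real^'n^'n"
  shows "dinvariant A (uminus ` S) \<longleftrightarrow> dinvariant A S"
  unfolding dinvariant_def by (auto simp: vec.neg)

theorem theorem3p18:
  fixes Q A :: "real^'n^'n"
    and u :: "'n \<Rightarrow> real^'n" and lam :: "'n \<Rightarrow> real" and k :: 'n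
  assumes symQ: "transpose Q = Q"
    and invQ: "invertible Q"
    and orth: "\<And>i j. u i \<bullet> u j = (if i = j then 1 else 0)"
    and eig: "\<And>i. Q *v u i = lam i *s u i"
    and neg: "lam k < 0"
    and pos: "\<And>i. i \<noteq> k \<Longrightarrow> lam i > 0"
  shows "(dinvariant A (CL Q (u k)) \<longleftrightarrow>
            (\<exists>\<mu>::real. \<mu> \<ge> 0 \<and> neg_semidef (transpose A ** Q ** A - \<mu> *\<^sub>R Q)
               \<and> u k \<bullet> (A *v u k) \<ge> 0
               \<and> u k \<bullet> ((A ** matrix_inv Q ** transpose A) *v u k) \<le> 0))
       \<and> (dinvariant A (uminus ` CL Q (u k)) \<longleftrightarrow>
            (\<exists>\<mu>::real. \<mu> \<ge> 0 \<and> neg_semidef (transpose A ** Q ** A - \<mu> *\<^sub>R Q)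
               \<and> u k \<bullet> (A *v u k) \<ge> 0
               \<and> u k \<bullet> ((A ** matrix_inv Q ** transpose A) *v u k) \<le> 0))"
proof -
  interpret lorentz_eigenbasis Q u lam k
    using assms by unfold_locales
  show ?thesis
    unfolding dinvariant_uminus dinvariant_CL_iff by simp
qed

end
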